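(* Assume $0\le\alpha<\beta$ and $\alpha+\beta<2$. Let $\tilde w_1:=\frac{1}{\sqrt N}\sum_{i=1}^N\sigma_i$ and $\tilde w_2:=\frac{1}{\sqrt N}\big(\sum_{i\in S}\sigma_i-\sum_{i\notin S}\sigma_i\big)$. Then, as $N\to\infty$, under $\mu_{N,\alpha,\beta,S}$ the vector $(\tilde w_1,\tilde w_2)$ converges in distribution to a centered two-dimensional Gaussian with covariance matrix \[ \Sigma=\begin{pmatrix}\dfrac{1}{1-\frac{\alpha+\beta}{2}}&0\\[2mm]0&\dfrac{1}{1-\frac{\beta-\alpha}{2}}\end{pmatrix}. \]
   Context: Block spin Ising model: $N$ is even, $S\subset\{1,\dots,N\}$ with $|S|=N/2$. Write $i\sim j$ if $i,j$ both lie in $S$ or both in $S^c$, $i\not\sim j$ otherwise. Hamiltonian $H_{N,\alpha,\beta,S}(\sigma)=-\frac{\beta}{2N}\sum_{i\sim j}\sigma_i\sigma_j-\frac{\alpha}{2N}\sum_{i\not\sim j}\sigma_i\sigma_j$ on $\{-1,+1\}^N$ (ordered pairs, including $i=j$), Gibbs measure $\mu_{N,\alpha,\beta,S}(\sigma)\propto e^{-H_{N,\alpha,\beta,S}(\sigma)}$. The set $S$ may depend on $N$. *)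

theory Defs
  imports "HOL-Probability.Probability"
begin

text \<open>Spin configurations on sites 1..N: sigma i in {-1,+1} for i in {1..N}, and 0 (dummy) elsewhere.\<close>
definition configs :: "nat \<Rightarrow> (nat \<Rightarrow> real) set" where
  "configs N = ({1..N} \<rightarrow>\<^sub>E {-1, 1})"

definition same_block :: "nat set \<Rightarrow> nat \<Rightarrow> nat \<Rightarrow> bool" where
  "same_block S i j \<longleftrightarrow> (i \<in> S \<longleftrightarrow> j \<in> S)"

text \<open>Hamiltonian of the block spin Ising model (sum over ordered pairs, including i = j).\<close>
definition hamiltonian :: "nat \<Rightarrow> real \<Rightarrow> real \<Rightarrow> nat set \<Rightarrow> (nat \<Rightarrow> real) \<Rightarrow> real" where
  "hamiltonian N \<alpha> \<beta> S \<sigma> =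
     - (\<beta> / (2 * real N)) * (\<Sum>i\<in>{1..N}. \<Sum>j\<in>{1..N}. if same_block S i j then \<sigma> i * \<sigma> j else 0)
     - (\<alpha> / (2 * real N)) * (\<Sum>i\<in>{1..N}. \<Sum>j\<in>{1..N}. if same_block S i j then 0 else \<sigma> i * \<sigma> j)"

definition gibbs_measure :: "nat \<Rightarrow> real \<Rightarrow> real \<Rightarrow> nat set \<Rightarrow> (nat \<Rightarrow> real) measure" where
  "gibbs_measure N \<alpha> \<beta> S =
     point_measure (configs N)
       (\<lambda>\<sigma>. ennreal (exp (- hamiltonian N \<alpha> \<beta> S \<sigma>) /
                       (\<Sum>\<tau>\<in>configs N. exp (- hamiltonian N \<alpha> \<beta> S \<tau>))))"

definition w1 :: "nat \<Rightarrow> (nat \<Rightarrow> real) \<Rightarrow> real" where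
  "w1 N \<sigma> = (\<Sum>i\<in>{1..N}. \<sigma> i) / sqrt (real N)"

definition w2 :: "nat \<Rightarrow> nat set \<Rightarrow> (nat \<Rightarrow> real) \<Rightarrow> real" where
  "w2 N S \<sigma> = ((\<Sum>i\<in>S. \<sigma> i) - (\<Sum>i\<in>{1..N} - S. \<sigma> i)) / sqrt (real N)"

text \<open>Centered 2-dimensional Gaussian with covariance matrix ((c11, c12), (c12, c22)),
  given by its Lebesgue density (c assumed positive definite).\<close>
definition gaussian2 :: "real \<Rightarrow> real \<Rightarrow> real \<Rightarrow> (real \<times> real) measure" where
  "gaussian2 c11 c12 c22 =
     density lborel (\<lambda>(x, y). ennreal
       (1 / (2 * pi * sqrt (c11 * c22 - c12\<^sup>2)) *
        exp (- (c22 * x\<^sup>2 - 2 * c12 * x * y + c11 * y\<^sup>2) / (2 * (c11 * c22 - c12\<^sup>2)))))"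

definition conv_distr2 ::
  "(nat \<Rightarrow> 'a measure) \<Rightarrow> (nat \<Rightarrow> 'a \<Rightarrow> real \<times> real) \<Rightarrow> (real \<times> real) measure \<Rightarrow> bool" where
  "conv_distr2 M X \<nu> \<longleftrightarrow>
     (\<forall>f :: real \<times> real \<Rightarrow> real. continuous_on UNIV f \<and> bounded (range f) \<longrightarrow>
        (\<lambda>n. integral\<^sup>L (M n) (\<lambda>\<omega>. f (X n \<omega>))) \<longlonglongrightarrow> integral\<^sup>L \<nu> f)"

end

theory Submission
  imports Defs "HOL-Real_Asymp.Real_Asymp"
begin

text \<open>
  Group the configurations by the numbers \<open>k\<close> and \<open>l\<close> of plus spins in \<open>S\<close> and in its complement.
  With \<open>u = (2 k - n) / \<surd>n\<close> and \<open>v = (2 l - n) / \<surd>n\<close> (here \<open>N = 2 n\<close>) one has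
  \<open>-H = \<beta>/4 (u\<^sup>2 + v\<^sup>2) + \<alpha>/2 u v\<close> and \<open>(w1, w2)\<close> is \<open>(u, v)\<close> rotated by 45 degrees, so every Gibbs
  expectation is a ratio of two double sums over \<open>(k, l)\<close> weighted by \<open>C(n, k) C(n, l)\<close>.
  Divided by the central binomial coefficient, \<open>C(n, k)\<close> is \<open>exp (- u\<^sup>2/2) (1 + o(1))\<close> locally uniformly
  and at most \<open>e\<^sup>1\<^sup>/\<^sup>2 exp (- (1/2 - \<epsilon>) u\<^sup>2)\<close> globally, as one sees by writing it as a product of
  factors \<open>(1 - y)/(1 + y)\<close>. Hence the double sums are integrals of step functions which converge,
  by dominated convergence (this is where \<open>\<alpha> + \<beta> < 2\<close> enters), to the integral of
  \<open>exp (- (u\<^sup>2 + v\<^sup>2)/2 + \<beta>/4 (u\<^sup>2 + v\<^sup>2) + \<alpha>/2 u v)\<close> against the test function.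
  The rotation diagonalises this quadratic form, with eigenvalues \<open>1 - (\<alpha> + \<beta>)/2\<close> and
  \<open>1 - (\<beta> - \<alpha>)/2\<close>: these are the inverse variances of the limit.
\<close>

section \<open>Gaussian bounds for binomial coefficients\<close>

lemma ratio_one_minus_one_plus_le_exp:
  fixes y :: real
  assumes "0 \<le> y" "y < 1"
  shows "(1 - y) / (1 + y) \<le> exp (- 2 * y)"
proof -
  let ?g = "\<lambda>t::real. (1 + t) - exp (2 * t) * (1 - t)"
  have "?g 0 \<le> ?g y"
  proof (rule DERIV_nonneg_imp_nondecreasing[OF assms(1)])
    fix t :: real
    have "1 - 2 * t \<le> exp (- (2 * t))"
      using exp_ge_add_one_self[of "- (2 * t)"] by simp
    then have "exp (2 * t) * (1 - 2 * t) \<le> 1"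
      using mult_left_mono[of "1 - 2 * t" "exp (- (2 * t))" "exp (2 * t)"] by (simp add: exp_minus)
    moreover have "(?g has_real_derivative (1 - exp (2 * t) * (1 - 2 * t))) (at t)"
      by (auto intro!: derivative_eq_intros simp: algebra_simps)
    ultimately show "\<exists>d. (?g has_real_derivative d) (at t) \<and> 0 \<le> d"
      by auto
  qed
  then have "1 - y \<le> (1 + y) * exp (- 2 * y)"
    by (simp add: exp_minus field_simps)
  then show ?thesis
    using assms by (simp add: divide_le_eq mult.commute)
qed

lemma exp_le_ratio_one_minus_one_plus:
  fixes y :: real
  assumes "0 \<le> y" "y \<le> 1/2"
  shows "exp (- 2 * y - 4 * y\<^sup>2) \<le> (1 - y) / (1 + y)"
proof -
  have "y * y * (2 * y) \<le> y * y"
    using assms mult_left_mono[of "2 * y" 1 "y * y"] by simp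
  then have "2 * y \<le> (2 * y + 4 * y\<^sup>2) * (1 - y)"
    by (simp add: algebra_simps power2_eq_square)
  then have "2 * y / (1 - y) \<le> 2 * y + 4 * y\<^sup>2"
    using assms by (simp add: divide_le_eq)
  then have "1 + 2 * y / (1 - y) \<le> exp (2 * y + 4 * y\<^sup>2)"
    using exp_ge_add_one_self[of "2 * y / (1 - y)"] by (meson exp_le_cancel_iff order_trans)
  then have "(1 + y) / (1 - y) \<le> exp (2 * y + 4 * y\<^sup>2)"
    using assms by (simp add: field_simps)
  then have "inverse (exp (2 * y + 4 * y\<^sup>2)) \<le> inverse ((1 + y) / (1 - y))"
    using assms by (intro le_imp_inverse_le) auto
  then show ?thesis
    by (simp add: exp_minus[symmetric])
qed

lemma real_of_nat_div2_bounds: "2 * real (n div 2) \<le> real n" "real n \<le> 2 * real (n div 2) + 1"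
proof -
  have "2 * (n div 2) \<le> n" "n \<le> 2 * (n div 2) + 1"
    by linarith+
  then have "real (2 * (n div 2)) \<le> real n" "real n \<le> real (2 * (n div 2) + 1)"
    by (simp_all only: of_nat_le_iff)
  then show "2 * real (n div 2) \<le> real n" "real n \<le> 2 * real (n div 2) + 1"
    by simp_all
qed

definition binomial_ratio :: "nat \<Rightarrow> nat \<Rightarrow> real" where
  "binomial_ratio n k = real (n choose k) / real (n choose (n div 2))"

lemma binomial_ratio_nonneg: "0 \<le> binomial_ratio n k"
  unfolding binomial_ratio_def by simp

lemma binomial_ratio_symmetric: "k \<le> n \<Longrightarrow> binomial_ratio n (n - k) = binomial_ratio n k"
  unfolding binomial_ratio_def by (simp add: binomial_symmetric[symmetric])

lemma binomial_ratio_prod: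
  assumes "n div 2 \<le> k" "k \<le> n"
  shows "binomial_ratio n k = (\<Prod>i\<in>{n div 2<..k}. real (n + 1 - i) / real i)"
  using assms
proof (induction k rule: dec_induct)
  case base
  then show ?case by (simp add: binomial_ratio_def)
next
  case (step k)
  obtain m where m: "n = Suc m"
    using step by (cases n) auto
  have "Suc k * (n choose Suc k) = n * (m choose k)"
    using Suc_times_binomial[where n = m and k = k] m by simp
  also have "\<dots> = (n - k) * (n choose k)"
    using binomial_absorb_comp[of n k] m by simp
  finally have "Suc k * (n choose Suc k) = (n - k) * (n choose k)" .
  then have "real (Suc k) * real (n choose Suc k) = real (n - k) * real (n choose k)"
    by (metis of_nat_mult)
  then have "real (n choose Suc k) = real (n choose k) * (real (n + 1 - Suc k) / real (Suc k))"
    by (simp add: field_simps)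
  then have "binomial_ratio n (Suc k) = binomial_ratio n k * (real (n + 1 - Suc k) / real (Suc k))"
    unfolding binomial_ratio_def by simp
  moreover have "{n div 2<..Suc k} = insert (Suc k) {n div 2<..k}"
    using step.hyps by auto
  ultimately show ?case
    using step by (simp add: mult.commute)
qed

definition binomial_step :: "nat \<Rightarrow> nat \<Rightarrow> real" where
  "binomial_step n i = (2 * real i - real n - 1) / (real n + 1)"

lemma binomial_step_bounds:
  assumes "n div 2 < i" "i \<le> k"
  shows "0 \<le> binomial_step n i" "binomial_step n i \<le> (2 * real k - real n) / (real n + 1)"
proof -
  have "real n + 1 \<le> 2 * real i" "real i \<le> real k"
    using assms by linarith+
  then show "0 \<le> binomial_step n i" "binomial_step n i \<le> (2 * real k - real n) / (real n + 1)"
    unfolding binomial_step_def by (simp_all add: divide_right_mono)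
qed

lemma binomial_ratio_prod_steps:
  assumes "n div 2 \<le> k" "k \<le> n"
  shows "binomial_ratio n k = (\<Prod>i\<in>{n div 2<..k}. (1 - binomial_step n i) / (1 + binomial_step n i))"
  unfolding binomial_ratio_prod[OF assms]
proof (rule prod.cong[OF refl])
  fix i assume i: "i \<in> {n div 2<..k}"
  then have "real (n + 1 - i) = real n + 1 - real i" "0 < i"
    using assms by (auto simp: of_nat_diff)
  moreover have "0 \<le> binomial_step n i"
    using i binomial_step_bounds(1)[of n i k] by simp
  moreover have "(real n + 1) * binomial_step n i = 2 * real i - real n - 1"
    unfolding binomial_step_def by simp
  ultimately show "real (n + 1 - i) / real i = (1 - binomial_step n i) / (1 + binomial_step n i)"
    by (simp add: frac_eq_eq algebra_simps)
qed

lemma sum_binomial_step: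
  assumes "n div 2 \<le> k"
  shows "(\<Sum>i\<in>{n div 2<..k}. binomial_step n i)
           = ((2 * real k - real n)\<^sup>2 - (real n - 2 * real (n div 2))\<^sup>2) / (4 * (real n + 1))"
proof -
  define s where "s = (\<Sum>i\<in>{n div 2<..k}. 2 * real i - real n - 1)"
  have s: "s = (real k - real (n div 2)) * (real k + real (n div 2) - real n)"
    unfolding s_def using assms
  proof (induction k rule: dec_induct)
    case (step k)
    then have "{n div 2<..Suc k} = insert (Suc k) {n div 2<..k}" by auto
    with step show ?case by (simp add: algebra_simps)
  qed simp
  have "(\<Sum>i\<in>{n div 2<..k}. binomial_step n i) = s / (real n + 1)"
    unfolding binomial_step_def s_def by (simp add: sum_divide_distrib)
  also have "\<dots> = ((2 * real k - real n)\<^sup>2 - (real n - 2 * real (n div 2))\<^sup>2) / (4 * (real n + 1))"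
    unfolding s by (simp add: power2_eq_square field_simps)
  finally show ?thesis .
qed

lemma binomial_ratio_upper_half_le:
  assumes "n div 2 \<le> k" "k \<le> n"
  shows "binomial_ratio n k \<le> exp (- ((2 * real k - real n)\<^sup>2 - 1) / (2 * (real n + 1)))"
proof -
  let ?y = "binomial_step n" and ?I = "{n div 2<..k}"
  have y: "0 \<le> ?y i" "?y i < 1" if "i \<in> ?I" for i
  proof -
    have "(2 * real k - real n) / (real n + 1) < 1"
      using assms by (simp add: divide_less_eq)
    then show "0 \<le> ?y i" "?y i < 1"
      using that binomial_step_bounds[of n i k] by (auto intro: order.strict_trans1)
  qed
  have "binomial_ratio n k \<le> (\<Prod>i\<in>?I. exp (- 2 * ?y i))"
    unfolding binomial_ratio_prod_steps[OF assms]
    by (intro prod_mono conjI ratio_one_minus_one_plus_le_exp divide_nonneg_nonneg)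
      (use y in \<open>force+\<close>)
  also have "\<dots> = exp (- 2 * (\<Sum>i\<in>?I. ?y i))"
    by (simp add: exp_sum sum_distrib_left)
  also have "\<dots> = exp (- ((2 * real k - real n)\<^sup>2 - (real n - 2 * real (n div 2))\<^sup>2) / (2 * (real n + 1)))"
    unfolding sum_binomial_step[OF assms(1)] by (simp add: field_simps)
  also have "\<dots> \<le> exp (- ((2 * real k - real n)\<^sup>2 - 1) / (2 * (real n + 1)))"
  proof -
    have "(real n - 2 * real (n div 2))\<^sup>2 \<le> 1"
      by (rule abs_square_le_1[THEN iffD2]) linarith
    then show ?thesis by (simp add: divide_le_eq frac_le)
  qed
  finally show ?thesis .
qed

lemma binomial_ratio_upper_half_ge:
  assumes "n div 2 \<le> k" "k \<le> n" "\<bar>2 * real k - real n\<bar> \<le> (real n + 1) / 2"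
  shows "exp (- (2 * real k - real n)\<^sup>2 / (2 * (real n + 1))
              - 2 * (\<bar>2 * real k - real n\<bar> + 1) * (2 * real k - real n)\<^sup>2 / (real n + 1)\<^sup>2)
           \<le> binomial_ratio n k"
proof -
  let ?y = "binomial_step n" and ?I = "{n div 2<..k}"
  define d where "d = 2 * real k - real n"
  have y: "0 \<le> ?y i" "?y i \<le> \<bar>d\<bar> / (real n + 1)" if "i \<in> ?I" for i
    using that binomial_step_bounds[of n i k] divide_right_mono[of d "\<bar>d\<bar>" "real n + 1"]
    unfolding d_def by auto
  have "\<bar>d\<bar> / (real n + 1) \<le> 1 / 2"
    using assms(3) unfolding d_def by (simp add: divide_le_eq)
  then have y_half: "?y i \<le> 1 / 2" if "i \<in> ?I" for i
    using y(2)[OF that] by linarith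
  have sum_y: "- d\<^sup>2 / (2 * (real n + 1)) \<le> - 2 * (\<Sum>i\<in>?I. ?y i)"
    unfolding sum_binomial_step[OF assms(1)] d_def by (simp add: field_simps)
  have "(\<Sum>i\<in>?I. (?y i)\<^sup>2) \<le> (\<Sum>i\<in>?I. (\<bar>d\<bar> / (real n + 1))\<^sup>2)"
    by (intro sum_mono power_mono) (use y in auto)
  also have "\<dots> = (real k - real (n div 2)) * d\<^sup>2 / (real n + 1)\<^sup>2"
    using assms(1) by (simp add: of_nat_diff power_divide)
  also have "\<dots> \<le> (\<bar>d\<bar> + 1) / 2 * d\<^sup>2 / (real n + 1)\<^sup>2"
    using real_of_nat_div2_bounds[of n] unfolding d_def
    by (intro divide_right_mono mult_right_mono) auto
  finally have "4 * (\<Sum>i\<in>?I. (?y i)\<^sup>2) \<le> 2 * (\<bar>d\<bar> + 1) * d\<^sup>2 / (real n + 1)\<^sup>2"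
    by (simp add: field_simps)
  then have "- d\<^sup>2 / (2 * (real n + 1)) - 2 * (\<bar>d\<bar> + 1) * d\<^sup>2 / (real n + 1)\<^sup>2
               \<le> - 2 * (\<Sum>i\<in>?I. ?y i) - 4 * (\<Sum>i\<in>?I. (?y i)\<^sup>2)"
    using sum_y by linarith
  then have "exp (- d\<^sup>2 / (2 * (real n + 1)) - 2 * (\<bar>d\<bar> + 1) * d\<^sup>2 / (real n + 1)\<^sup>2)
               \<le> exp (- 2 * (\<Sum>i\<in>?I. ?y i) - 4 * (\<Sum>i\<in>?I. (?y i)\<^sup>2))"
    by (simp only: exp_le_cancel_iff)
  also have "\<dots> = (\<Prod>i\<in>?I. exp (- 2 * ?y i - 4 * (?y i)\<^sup>2))"
    by (simp add: exp_sum[symmetric] sum_subtractf sum_distrib_left)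
  also have "\<dots> \<le> binomial_ratio n k"
    unfolding binomial_ratio_prod_steps[OF assms(1,2)]
    by (intro prod_mono conjI exp_le_ratio_one_minus_one_plus) (use y y_half in auto)
  finally show ?thesis
    unfolding d_def .
qed

lemma binomial_ratio_le_gaussian:
  assumes "k \<le> n"
  shows "binomial_ratio n k \<le> exp (- ((2 * real k - real n)\<^sup>2 - 1) / (2 * (real n + 1)))"
proof (cases "n div 2 \<le> k")
  case True
  then show ?thesis
    using binomial_ratio_upper_half_le assms by blast
next
  case False
  then have "binomial_ratio n (n - k) \<le> exp (- ((2 * real (n - k) - real n)\<^sup>2 - 1) / (2 * (real n + 1)))"
    by (intro binomial_ratio_upper_half_le) auto
  moreover have "(2 * real (n - k) - real n)\<^sup>2 = (2 * real k - real n)\<^sup>2"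
    using assms by (simp add: of_nat_diff power2_eq_square algebra_simps)
  ultimately show ?thesis
    using binomial_ratio_symmetric[OF assms] by simp
qed

lemma binomial_ratio_ge_gaussian:
  assumes "k \<le> n" "\<bar>2 * real k - real n\<bar> \<le> (real n + 1) / 2"
  shows "exp (- (2 * real k - real n)\<^sup>2 / (2 * (real n + 1))
              - 2 * (\<bar>2 * real k - real n\<bar> + 1) * (2 * real k - real n)\<^sup>2 / (real n + 1)\<^sup>2)
           \<le> binomial_ratio n k"
proof (cases "n div 2 \<le> k")
  case True
  then show ?thesis
    using binomial_ratio_upper_half_ge assms by blast
next
  case False
  have reflect: "2 * real (n - k) - real n = - (2 * real k - real n)"
    using assms by (simp add: of_nat_diff)
  have "\<bar>2 * real (n - k) - real n\<bar> = \<bar>2 * real k - real n\<bar>"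
    "(2 * real (n - k) - real n)\<^sup>2 = (2 * real k - real n)\<^sup>2"
    by (simp_all only: reflect abs_minus_cancel power2_minus)
  with False assms show ?thesis
    using binomial_ratio_upper_half_ge[of n "n - k"] binomial_ratio_symmetric[OF assms(1)] by simp
qed

definition scaled_magnetization :: "nat \<Rightarrow> nat \<Rightarrow> real" where
  "scaled_magnetization n k = (2 * real k - real n) / sqrt (real n)"

lemma scaled_magnetization_sq:
  "0 < n \<Longrightarrow> (2 * real k - real n)\<^sup>2 = (scaled_magnetization n k)\<^sup>2 * real n"
  unfolding scaled_magnetization_def by (simp add: power_divide)

lemma binomial_ratio_scaled_bounds:
  fixes n k :: nat
  defines "q \<equiv> scaled_magnetization n k"
  assumes "0 < n" "k \<le> n" "\<bar>q\<bar> * (sqrt (real n) / (real n + 1)) < 1 / 2"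
  shows "exp (- (q\<^sup>2 * (real n / (real n + 1))) / 2
              - 2 * (\<bar>q\<bar> * (sqrt (real n) * real n / (real n + 1)\<^sup>2) + real n / (real n + 1)\<^sup>2) * q\<^sup>2)
           \<le> binomial_ratio n k"
    and "binomial_ratio n k \<le> exp (- (q\<^sup>2 * (real n / (real n + 1)) - 1 / (real n + 1)) / 2)"
proof -
  define d where "d = 2 * real k - real n"
  have d: "d\<^sup>2 = q\<^sup>2 * real n" "\<bar>d\<bar> = \<bar>q\<bar> * sqrt (real n)"
    using assms(2) unfolding d_def q_def scaled_magnetization_def by (simp_all add: power_divide abs_mult)
  have "\<bar>d\<bar> \<le> (real n + 1) / 2"
    using assms(4) unfolding d(2) by (simp add: field_simps)
  then have "exp (- d\<^sup>2 / (2 * (real n + 1)) - 2 * (\<bar>d\<bar> + 1) * d\<^sup>2 / (real n + 1)\<^sup>2) \<le> binomial_ratio n k"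
    using binomial_ratio_ge_gaussian[OF assms(3)] unfolding d_def by blast
  moreover have "- d\<^sup>2 / (2 * (real n + 1)) - 2 * (\<bar>d\<bar> + 1) * d\<^sup>2 / (real n + 1)\<^sup>2
      = - (q\<^sup>2 * (real n / (real n + 1))) / 2
        - 2 * (\<bar>q\<bar> * (sqrt (real n) * real n / (real n + 1)\<^sup>2) + real n / (real n + 1)\<^sup>2) * q\<^sup>2"
    unfolding d by (simp add: field_simps)
  ultimately show "exp (- (q\<^sup>2 * (real n / (real n + 1))) / 2
              - 2 * (\<bar>q\<bar> * (sqrt (real n) * real n / (real n + 1)\<^sup>2) + real n / (real n + 1)\<^sup>2) * q\<^sup>2)
           \<le> binomial_ratio n k"
    by simp
  have "- (d\<^sup>2 - 1) / (2 * (real n + 1)) = - (q\<^sup>2 * (real n / (real n + 1)) - 1 / (real n + 1)) / 2"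
    unfolding d(1) by (simp add: diff_divide_distrib divide_divide_eq_left mult.commute)
  then show "binomial_ratio n k \<le> exp (- (q\<^sup>2 * (real n / (real n + 1)) - 1 / (real n + 1)) / 2)"
    using binomial_ratio_le_gaussian[OF assms(3)] unfolding d_def by metis
qed

lemma binomial_ratio_tendsto_gaussian:
  assumes k: "\<forall>\<^sub>F n in sequentially. k n \<le> n"
    and x: "(\<lambda>n. scaled_magnetization n (k n)) \<longlonglongrightarrow> x"
  shows "(\<lambda>n. binomial_ratio n (k n)) \<longlonglongrightarrow> exp (- x\<^sup>2 / 2)"
proof -
  define q where "q n = scaled_magnetization n (k n)" for n
  have q: "q \<longlonglongrightarrow> x"
    using x unfolding q_def .
  have lim: "(\<lambda>n. real n / (real n + 1)) \<longlonglongrightarrow> 1" "(\<lambda>n. 1 / (real n + 1)) \<longlonglongrightarrow> 0"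
    "(\<lambda>n. sqrt (real n) * real n / (real n + 1)\<^sup>2) \<longlonglongrightarrow> 0" "(\<lambda>n. real n / (real n + 1)\<^sup>2) \<longlonglongrightarrow> 0"
    "(\<lambda>n. sqrt (real n) / (real n + 1)) \<longlonglongrightarrow> 0"
    by real_asymp+
  define U where "U n = exp (- ((q n)\<^sup>2 * (real n / (real n + 1)) - 1 / (real n + 1)) / 2)" for n
  define L where "L n = exp (- ((q n)\<^sup>2 * (real n / (real n + 1))) / 2
      - 2 * (\<bar>q n\<bar> * (sqrt (real n) * real n / (real n + 1)\<^sup>2) + real n / (real n + 1)\<^sup>2) * (q n)\<^sup>2)" for n
  have "U \<longlonglongrightarrow> exp (- (x\<^sup>2 * 1 - 0) / 2)"
    unfolding U_def by (intro tendsto_intros q lim) simp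
  then have U: "U \<longlonglongrightarrow> exp (- x\<^sup>2 / 2)"
    by simp
  have "L \<longlonglongrightarrow> exp (- (x\<^sup>2 * 1) / 2 - 2 * (\<bar>x\<bar> * 0 + 0) * x\<^sup>2)"
    unfolding L_def by (intro tendsto_intros q lim) simp
  then have L: "L \<longlonglongrightarrow> exp (- x\<^sup>2 / 2)"
    by simp
  have "\<forall>\<^sub>F n in sequentially. \<bar>q n\<bar> * (sqrt (real n) / (real n + 1)) < 1 / 2"
    using order_tendstoD(2)[OF tendsto_mult[OF tendsto_rabs[OF q] lim(5)], of "1 / 2"] by simp
  then have "\<forall>\<^sub>F n in sequentially. L n \<le> binomial_ratio n (k n) \<and> binomial_ratio n (k n) \<le> U n"
    using k eventually_gt_at_top[of 0]
    unfolding L_def U_def q_def by eventually_elim (intro conjI binomial_ratio_scaled_bounds; simp)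
  then show ?thesis
    using tendsto_sandwich[OF _ _ L U] by (simp add: eventually_conj_iff)
qed

lemma binomial_ratio_le_exp_scaled:
  assumes "0 < n" "k \<le> n" "0 \<le> \<epsilon>" "1 - 2 * \<epsilon> \<le> real n / (real n + 1)"
  shows "binomial_ratio n k \<le> exp (1 / 2 - (1 / 2 - \<epsilon>) * (scaled_magnetization n k)\<^sup>2)"
proof -
  let ?q = "scaled_magnetization n k"
  have "- ((2 * real k - real n)\<^sup>2 - 1) / (2 * (real n + 1))
          = - ?q\<^sup>2 * (real n / (real n + 1)) / 2 + 1 / (2 * (real n + 1))"
    unfolding scaled_magnetization_sq[OF assms(1)] by (simp add: field_simps)
  also have "\<dots> \<le> - ?q\<^sup>2 * (1 - 2 * \<epsilon>) / 2 + 1 / 2"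
  proof (rule add_mono)
    show "- ?q\<^sup>2 * (real n / (real n + 1)) / 2 \<le> - ?q\<^sup>2 * (1 - 2 * \<epsilon>) / 2"
      using assms(4) by (intro divide_right_mono mult_left_mono_neg) auto
  qed (simp add: divide_le_eq)
  also have "\<dots> = 1 / 2 - (1 / 2 - \<epsilon>) * ?q\<^sup>2"
    by (simp add: field_simps)
  finally show ?thesis
    using binomial_ratio_le_gaussian[OF assms(2)] by (meson exp_le_cancel_iff order_trans)
qed

section \<open>Gibbs expectations as lattice sums\<close>

lemma sum_Pow_card:
  fixes h :: "nat \<Rightarrow> 'a::semiring_1"
  assumes "finite T"
  shows "(\<Sum>X\<in>Pow T. h (card X)) = (\<Sum>k\<le>card T. of_nat (card T choose k) * h k)"
proof -
  have "(\<Sum>X\<in>Pow T. h (card X)) = (\<Sum>k\<le>card T. \<Sum>X\<in>{X \<in> Pow T. card X = k}. h (card X))"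
    using assms by (intro sum.group[symmetric]) (auto intro: card_mono)
  also have "\<dots> = (\<Sum>k\<le>card T. of_nat (card T choose k) * h k)"
  proof (rule sum.cong[OF refl])
    fix k
    have "{X \<in> Pow T. card X = k} = {B. B \<subseteq> T \<and> card B = k}"
      by auto
    then show "(\<Sum>X\<in>{X \<in> Pow T. card X = k}. h (card X)) = of_nat (card T choose k) * h k"
      using n_subsets[OF assms, of k] by (simp add: of_nat_mult)
  qed
  finally show ?thesis .
qed

lemma sum_spins_eq_card_plus:
  fixes \<sigma> :: "'a \<Rightarrow> real"
  assumes "finite B" "\<And>i. i \<in> B \<Longrightarrow> \<sigma> i \<in> {-1, 1}"
  shows "(\<Sum>i\<in>B. \<sigma> i) = 2 * real (card {i\<in>B. \<sigma> i = 1}) - real (card B)"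
proof -
  let ?P = "{i\<in>B. \<sigma> i = 1}"
  have "(\<Sum>i\<in>B. \<sigma> i) = (\<Sum>i\<in>B. 2 * (if \<sigma> i = 1 then 1 else 0) - 1)"
    using assms(2) by (intro sum.cong) auto
  also have "\<dots> = 2 * (\<Sum>i\<in>B. if \<sigma> i = 1 then 1 else 0) - real (card B)"
    by (simp add: sum_subtractf sum_distrib_left)
  also have "(\<Sum>i\<in>B. if \<sigma> i = 1 then 1 else 0) = real (card ?P)"
    using assms(1) by (simp add: sum.If_cases Int_def)
  finally show ?thesis .
qed

lemma sum_spin_configs_eq_sum_plus_sets:
  fixes \<Phi> :: "real \<Rightarrow> real \<Rightarrow> real" and A T :: "'a set"
  assumes "finite A" "T \<subseteq> A"
  shows "(\<Sum>\<sigma>\<in>A \<rightarrow>\<^sub>E {-1, 1}. \<Phi> (\<Sum>i\<in>T. \<sigma> i) (\<Sum>i\<in>A - T. \<sigma> i))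
       = (\<Sum>X\<in>Pow T. \<Sum>Y\<in>Pow (A - T).
            \<Phi> (2 * real (card X) - real (card T)) (2 * real (card Y) - real (card (A - T))))"
proof -
  have fin: "finite T" "finite (A - T)"
    using assms finite_subset by auto
  define plus_sets where "plus_sets \<sigma> = ({i\<in>T. \<sigma> i = 1}, {i\<in>A - T. \<sigma> i = 1})" for \<sigma> :: "'a \<Rightarrow> real"
  define spins where "spins XY = (\<lambda>i. if i \<in> A then if i \<in> fst XY \<union> snd XY then 1 else -1 else undefined :: real)"
    for XY :: "'a set \<times> 'a set"
  have "(\<Sum>\<sigma>\<in>A \<rightarrow>\<^sub>E {-1, 1}. \<Phi> (\<Sum>i\<in>T. \<sigma> i) (\<Sum>i\<in>A - T. \<sigma> i))
      = (\<Sum>XY\<in>Pow T \<times> Pow (A - T).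
           \<Phi> (2 * real (card (fst XY)) - real (card T)) (2 * real (card (snd XY)) - real (card (A - T))))"
  proof (rule sum.reindex_bij_witness[where i = spins and j = plus_sets])
    fix \<sigma> :: "'a \<Rightarrow> real" assume \<sigma>: "\<sigma> \<in> A \<rightarrow>\<^sub>E {-1, 1}"
    then have pm: "\<sigma> i \<in> {-1, 1}" if "i \<in> A" for i
      using that by auto
    show "spins (plus_sets \<sigma>) = \<sigma>"
    proof
      fix i
      show "spins (plus_sets \<sigma>) i = \<sigma> i"
        using \<sigma> assms(2) pm[of i]
        by (cases "i \<in> A") (auto simp: spins_def plus_sets_def PiE_def extensional_def)
    qed
    show "plus_sets \<sigma> \<in> Pow T \<times> Pow (A - T)"
      by (auto simp: plus_sets_def)
    have "(\<Sum>i\<in>T. \<sigma> i) = 2 * real (card {i\<in>T. \<sigma> i = 1}) - real (card T)"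
      using assms(2) by (intro sum_spins_eq_card_plus fin pm) auto
    moreover have "(\<Sum>i\<in>A - T. \<sigma> i) = 2 * real (card {i\<in>A - T. \<sigma> i = 1}) - real (card (A - T))"
      by (intro sum_spins_eq_card_plus fin pm) auto
    ultimately show "\<Phi> (2 * real (card (fst (plus_sets \<sigma>))) - real (card T))
            (2 * real (card (snd (plus_sets \<sigma>))) - real (card (A - T)))
          = \<Phi> (\<Sum>i\<in>T. \<sigma> i) (\<Sum>i\<in>A - T. \<sigma> i)"
      by (simp add: plus_sets_def)
  next
    fix XY assume "XY \<in> Pow T \<times> Pow (A - T)"
    then show "plus_sets (spins XY) = XY" "spins XY \<in> A \<rightarrow>\<^sub>E {-1, 1}"
      using assms(2) by (auto simp: spins_def plus_sets_def split: if_splits)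
  qed
  then show ?thesis
    by (simp add: sum.cartesian_product split_beta)
qed

lemma sum_spin_configs_block_sums:
  fixes \<Phi> :: "real \<Rightarrow> real \<Rightarrow> real" and A T :: "'a set"
  assumes "finite A" "T \<subseteq> A"
  shows "(\<Sum>\<sigma>\<in>A \<rightarrow>\<^sub>E {-1, 1}. \<Phi> (\<Sum>i\<in>T. \<sigma> i) (\<Sum>i\<in>A - T. \<sigma> i))
       = (\<Sum>k\<le>card T. \<Sum>l\<le>card (A - T). real (card T choose k) * real (card (A - T) choose l)
            * \<Phi> (2 * real k - real (card T)) (2 * real l - real (card (A - T))))"
proof -
  have fin: "finite T" "finite (A - T)"
    using assms finite_subset by auto
  have "(\<Sum>\<sigma>\<in>A \<rightarrow>\<^sub>E {-1, 1}. \<Phi> (\<Sum>i\<in>T. \<sigma> i) (\<Sum>i\<in>A - T. \<sigma> i))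
      = (\<Sum>X\<in>Pow T. \<Sum>l\<le>card (A - T). real (card (A - T) choose l)
           * \<Phi> (2 * real (card X) - real (card T)) (2 * real l - real (card (A - T))))"
    unfolding sum_spin_configs_eq_sum_plus_sets[OF assms] by (intro sum.cong refl sum_Pow_card fin)
  also have "\<dots> = (\<Sum>k\<le>card T. real (card T choose k) * (\<Sum>l\<le>card (A - T). real (card (A - T) choose l)
           * \<Phi> (2 * real k - real (card T)) (2 * real l - real (card (A - T)))))"
    by (rule sum_Pow_card[OF fin(1)])
  finally show ?thesis
    by (simp add: sum_distrib_left mult.assoc)
qed

lemma double_sum_same_block:
  fixes \<sigma> :: "nat \<Rightarrow> real" and A T :: "nat set"
  assumes "finite A" "T \<subseteq> A"
  shows "(\<Sum>i\<in>A. \<Sum>j\<in>A. if same_block T i j then \<sigma> i * \<sigma> j else 0)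
           = (\<Sum>i\<in>T. \<sigma> i)\<^sup>2 + (\<Sum>i\<in>A - T. \<sigma> i)\<^sup>2"
    and "(\<Sum>i\<in>A. \<Sum>j\<in>A. if same_block T i j then 0 else \<sigma> i * \<sigma> j)
           = 2 * (\<Sum>i\<in>T. \<sigma> i) * (\<Sum>i\<in>A - T. \<sigma> i)"
proof -
  let ?m1 = "\<Sum>i\<in>T. \<sigma> i" and ?m2 = "\<Sum>i\<in>A - T. \<sigma> i"
  have blocks: "A \<inter> {j. j \<in> T} = T" "A \<inter> - {j. j \<in> T} = A - T" "A \<inter> T = T"
    "A \<inter> {j. j \<notin> T} = A - T" "A \<inter> - T = A - T" "A \<inter> - {j. j \<notin> T} = T"
    using assms by auto
  have "(\<Sum>j\<in>A. if same_block T i j then \<sigma> j else 0) = (if i \<in> T then ?m1 else ?m2)"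
    "(\<Sum>j\<in>A. if same_block T i j then 0 else \<sigma> j) = (if i \<in> T then ?m2 else ?m1)" for i
    using assms(1) by (cases "i \<in> T"; simp add: same_block_def sum.If_cases blocks)+
  moreover have "(\<Sum>j\<in>A. if same_block T i j then \<sigma> i * \<sigma> j else 0)
      = \<sigma> i * (\<Sum>j\<in>A. if same_block T i j then \<sigma> j else 0)"
    "(\<Sum>j\<in>A. if same_block T i j then 0 else \<sigma> i * \<sigma> j)
      = \<sigma> i * (\<Sum>j\<in>A. if same_block T i j then 0 else \<sigma> j)" for i
    by (subst sum_distrib_left, rule sum.cong, auto)+
  ultimately have inner: "(\<Sum>j\<in>A. if same_block T i j then \<sigma> i * \<sigma> j else 0) = \<sigma> i * (if i \<in> T then ?m1 else ?m2)"
    "(\<Sum>j\<in>A. if same_block T i j then 0 else \<sigma> i * \<sigma> j) = \<sigma> i * (if i \<in> T then ?m2 else ?m1)" for i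
    by presburger+
  show "(\<Sum>i\<in>A. \<Sum>j\<in>A. if same_block T i j then \<sigma> i * \<sigma> j else 0) = ?m1\<^sup>2 + ?m2\<^sup>2"
    using assms(1) by (simp add: inner if_distrib sum.If_cases blocks sum_distrib_right power2_eq_square)
  have "(\<Sum>i\<in>A. \<sigma> i * (if i \<in> T then ?m2 else ?m1)) = ?m1 * ?m2 + ?m2 * ?m1"
    using assms(1) by (simp add: if_distrib sum.If_cases blocks sum_distrib_right)
  then show "(\<Sum>i\<in>A. \<Sum>j\<in>A. if same_block T i j then 0 else \<sigma> i * \<sigma> j) = 2 * ?m1 * ?m2"
    by (simp add: inner)
qed

lemma hamiltonian_block_sums:
  assumes "T \<subseteq> {1..N}"
  shows "hamiltonian N \<alpha> \<beta> T \<sigma> = - (\<beta> * ((\<Sum>i\<in>T. \<sigma> i)\<^sup>2 + (\<Sum>i\<in>{1..N} - T. \<sigma> i)\<^sup>2)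
            + 2 * \<alpha> * (\<Sum>i\<in>T. \<sigma> i) * (\<Sum>i\<in>{1..N} - T. \<sigma> i)) / (2 * real N)"
  unfolding hamiltonian_def double_sum_same_block[OF finite_atLeastAtMost assms]
  by (cases "N = 0") (simp_all add: field_simps)

definition rot45 :: "real \<times> real \<Rightarrow> real \<times> real" where
  "rot45 z = ((fst z + snd z) / sqrt 2, (fst z - snd z) / sqrt 2)"

definition boltzmann_obs :: "real \<Rightarrow> real \<Rightarrow> (real \<times> real \<Rightarrow> real) \<Rightarrow> real \<times> real \<Rightarrow> real" where
  "boltzmann_obs \<alpha> \<beta> \<phi> z = exp (\<beta> / 4 * ((fst z)\<^sup>2 + (snd z)\<^sup>2) + \<alpha> / 2 * (fst z * snd z)) * \<phi> (rot45 z)"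

definition lattice_sum :: "real \<Rightarrow> real \<Rightarrow> (real \<times> real \<Rightarrow> real) \<Rightarrow> nat \<Rightarrow> real" where
  "lattice_sum \<alpha> \<beta> \<phi> n = (\<Sum>k\<le>n. \<Sum>l\<le>n. binomial_ratio n k * binomial_ratio n l
      * boltzmann_obs \<alpha> \<beta> \<phi> (scaled_magnetization n k, scaled_magnetization n l))"

lemma gibbs_weight_eq_boltzmann_obs:
  assumes "0 < n" "T \<subseteq> {1..2 * n}"
  shows "exp (- hamiltonian (2 * n) \<alpha> \<beta> T \<sigma>) * \<phi> (w1 (2 * n) \<sigma>, w2 (2 * n) T \<sigma>)
       = boltzmann_obs \<alpha> \<beta> \<phi> ((\<Sum>i\<in>T. \<sigma> i) / sqrt (real n), (\<Sum>i\<in>{1..2 * n} - T. \<sigma> i) / sqrt (real n))"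
proof -
  define m1 where "m1 = (\<Sum>i\<in>T. \<sigma> i)"
  define m2 where "m2 = (\<Sum>i\<in>{1..2 * n} - T. \<sigma> i)"
  have sqrt_n: "0 < sqrt (real n)" "(sqrt (real n))\<^sup>2 = real n"
    using assms(1) by simp_all
  have "- hamiltonian (2 * n) \<alpha> \<beta> T \<sigma>
      = \<beta> / 4 * ((m1 / sqrt (real n))\<^sup>2 + (m2 / sqrt (real n))\<^sup>2) + \<alpha> / 2 * (m1 / sqrt (real n) * (m2 / sqrt (real n)))"
    unfolding hamiltonian_block_sums[OF assms(2)] m1_def[symmetric] m2_def[symmetric]
    using assms(1) by (simp add: power_divide sqrt_n field_simps power2_eq_square[of "sqrt (real n)", symmetric])
  moreover have "(\<Sum>i\<in>{1..2 * n}. \<sigma> i) = m1 + m2"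
    unfolding m1_def m2_def by (metis add.commute sum.subset_diff[OF assms(2) finite_atLeastAtMost])
  then have "(w1 (2 * n) \<sigma>, w2 (2 * n) T \<sigma>) = rot45 (m1 / sqrt (real n), m2 / sqrt (real n))"
    unfolding w1_def w2_def rot45_def m1_def[symmetric] m2_def[symmetric]
    using sqrt_n by (simp add: real_sqrt_mult field_simps)
  ultimately show ?thesis
    unfolding boltzmann_obs_def m1_def m2_def by simp
qed

lemma sum_gibbs_weights:
  assumes "0 < n" "T \<subseteq> {1..2 * n}" "card T = n"
  shows "(\<Sum>\<sigma>\<in>configs (2 * n). exp (- hamiltonian (2 * n) \<alpha> \<beta> T \<sigma>) * \<phi> (w1 (2 * n) \<sigma>, w2 (2 * n) T \<sigma>))
     = (real (n choose (n div 2)))\<^sup>2 * lattice_sum \<alpha> \<beta> \<phi> n"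
proof -
  have "card ({1..2 * n} - T) = n"
    using assms(2,3) by (simp add: card_Diff_subset finite_subset)
  then have "(\<Sum>\<sigma>\<in>configs (2 * n). exp (- hamiltonian (2 * n) \<alpha> \<beta> T \<sigma>) * \<phi> (w1 (2 * n) \<sigma>, w2 (2 * n) T \<sigma>))
      = (\<Sum>k\<le>n. \<Sum>l\<le>n. real (n choose k) * real (n choose l)
           * boltzmann_obs \<alpha> \<beta> \<phi> (scaled_magnetization n k, scaled_magnetization n l))"
    unfolding configs_def gibbs_weight_eq_boltzmann_obs[OF assms(1,2)]
    using sum_spin_configs_block_sums[OF finite_atLeastAtMost assms(2),
        of "\<lambda>a b. boltzmann_obs \<alpha> \<beta> \<phi> (a / sqrt (real n), b / sqrt (real n))"] assms(3)
    by (simp add: scaled_magnetization_def)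
  also have "\<dots> = (real (n choose (n div 2)))\<^sup>2 * lattice_sum \<alpha> \<beta> \<phi> n"
    unfolding lattice_sum_def sum_distrib_left binomial_ratio_def
    by (intro sum.cong refl) (simp add: power2_eq_square)
  finally show ?thesis .
qed

lemma integral_gibbs_measure_eq_lattice_sums:
  assumes "0 < n" "T \<subseteq> {1..2 * n}" "card T = n"
  shows "integral\<^sup>L (gibbs_measure (2 * n) \<alpha> \<beta> T) (\<lambda>\<sigma>. f (w1 (2 * n) \<sigma>, w2 (2 * n) T \<sigma>))
       = lattice_sum \<alpha> \<beta> f n / lattice_sum \<alpha> \<beta> (\<lambda>_. 1) n"
proof -
  let ?Z = "\<Sum>\<tau>\<in>configs (2 * n). exp (- hamiltonian (2 * n) \<alpha> \<beta> T \<tau>)"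
  have "finite (configs (2 * n))"
    unfolding configs_def by (simp add: finite_PiE)
  then have "integral\<^sup>L (gibbs_measure (2 * n) \<alpha> \<beta> T) (\<lambda>\<sigma>. f (w1 (2 * n) \<sigma>, w2 (2 * n) T \<sigma>))
      = (\<Sum>\<sigma>\<in>configs (2 * n). exp (- hamiltonian (2 * n) \<alpha> \<beta> T \<sigma>) * f (w1 (2 * n) \<sigma>, w2 (2 * n) T \<sigma>)) / ?Z"
    unfolding gibbs_measure_def
    by (subst lebesgue_integral_point_measure_finite) (auto intro!: sum_nonneg divide_nonneg_nonneg simp: sum_divide_distrib)
  also have "\<dots> = lattice_sum \<alpha> \<beta> f n / lattice_sum \<alpha> \<beta> (\<lambda>_. 1) n"
    using sum_gibbs_weights[OF assms, of \<alpha> \<beta> f] sum_gibbs_weights[OF assms, of \<alpha> \<beta> "\<lambda>_. 1"] by simp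
  finally show ?thesis .
qed

section \<open>Step functions and their limit\<close>

definition cell :: "nat \<Rightarrow> nat \<Rightarrow> real set" where
  "cell n k = {scaled_magnetization n k - 1 / sqrt (real n) ..< scaled_magnetization n k + 1 / sqrt (real n)}"

definition cell_index :: "nat \<Rightarrow> real \<Rightarrow> int" where
  "cell_index n x = \<lfloor>(x * sqrt (real n) + real n + 1) / 2\<rfloor>"

definition step_density :: "real \<Rightarrow> real \<Rightarrow> (real \<times> real \<Rightarrow> real) \<Rightarrow> nat \<Rightarrow> real \<times> real \<Rightarrow> real" where
  "step_density \<alpha> \<beta> \<phi> n z = (\<Sum>k\<le>n. \<Sum>l\<le>n. binomial_ratio n k * binomial_ratio n l
      * boltzmann_obs \<alpha> \<beta> \<phi> (scaled_magnetization n k, scaled_magnetization n l)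
      * indicator (cell n k \<times> cell n l) z)"

lemma integral_indicator_box:
  fixes a b c d :: real
  assumes "a \<le> b" "c \<le> d"
  shows "integrable lborel (indicator ({a..<b} \<times> {c..<d}) :: real \<times> real \<Rightarrow> real)"
    and "integral\<^sup>L lborel (indicator ({a..<b} \<times> {c..<d}) :: real \<times> real \<Rightarrow> real) = (b - a) * (d - c)"
proof -
  have box: "emeasure (lborel :: (real \<times> real) measure) ({a..<b} \<times> {c..<d}) = ennreal ((b - a) * (d - c))"
    unfolding lborel_prod[symmetric]
    using assms by (simp add: lborel.emeasure_pair_measure_Times ennreal_mult)
  have "{a..<b} \<times> {c..<d} \<in> sets lborel"
    unfolding sets_lborel borel_prod[symmetric] by (intro pair_measureI) auto
  then show "integrable lborel (indicator ({a..<b} \<times> {c..<d}) :: real \<times> real \<Rightarrow> real)"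
    by (rule integrable_real_indicator) (simp add: box)
  show "integral\<^sup>L lborel (indicator ({a..<b} \<times> {c..<d}) :: real \<times> real \<Rightarrow> real) = (b - a) * (d - c)"
    using assms by (simp add: measure_def box)
qed

lemma step_density_integral:
  assumes "0 < n"
  shows "integrable lborel (step_density \<alpha> \<beta> \<phi> n)"
    and "integral\<^sup>L lborel (step_density \<alpha> \<beta> \<phi> n) = 4 / real n * lattice_sum \<alpha> \<beta> \<phi> n"
proof -
  let ?w = "\<lambda>k l. binomial_ratio n k * binomial_ratio n l
      * boltzmann_obs \<alpha> \<beta> \<phi> (scaled_magnetization n k, scaled_magnetization n l)"
  have le: "scaled_magnetization n k - 1 / sqrt (real n) \<le> scaled_magnetization n k + 1 / sqrt (real n)" for k
    by simp
  have int: "integrable lborel (indicator (cell n k \<times> cell n l) :: real \<times> real \<Rightarrow> real)"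
    "integral\<^sup>L lborel (indicator (cell n k \<times> cell n l) :: real \<times> real \<Rightarrow> real) = 4 / real n" for k l
  proof -
    show "integrable lborel (indicator (cell n k \<times> cell n l) :: real \<times> real \<Rightarrow> real)"
      unfolding cell_def by (rule integral_indicator_box(1)[OF le le])
    show "integral\<^sup>L lborel (indicator (cell n k \<times> cell n l) :: real \<times> real \<Rightarrow> real) = 4 / real n"
      using assms unfolding cell_def integral_indicator_box(2)[OF le le]
      by (simp add: power_divide)
  qed
  then show "integrable lborel (step_density \<alpha> \<beta> \<phi> n)"
    unfolding step_density_def[abs_def] by (intro Bochner_Integration.integrable_sum integrable_mult_right)
  have int_term: "integrable lborel (\<lambda>z. ?w k l * indicator (cell n k \<times> cell n l) z)" for k l
    using int(1) by (rule integrable_mult_right)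
  have "integral\<^sup>L lborel (step_density \<alpha> \<beta> \<phi> n)
      = (\<Sum>k\<le>n. integral\<^sup>L lborel (\<lambda>z. \<Sum>l\<le>n. ?w k l * indicator (cell n k \<times> cell n l) z))"
    unfolding step_density_def[abs_def]
    by (intro Bochner_Integration.integral_sum Bochner_Integration.integrable_sum int_term)
  also have "\<dots> = (\<Sum>k\<le>n. \<Sum>l\<le>n. integral\<^sup>L lborel (\<lambda>z. ?w k l * indicator (cell n k \<times> cell n l) z))"
    by (intro sum.cong refl Bochner_Integration.integral_sum int_term)
  also have "\<dots> = 4 / real n * lattice_sum \<alpha> \<beta> \<phi> n"
    unfolding lattice_sum_def sum_distrib_left integral_mult_right_zero int(2)
    by (simp add: mult.commute)
  finally show "integral\<^sup>L lborel (step_density \<alpha> \<beta> \<phi> n) = 4 / real n * lattice_sum \<alpha> \<beta> \<phi> n" .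
qed

lemma mem_cell_iff:
  assumes "0 < n"
  shows "x \<in> cell n k \<longleftrightarrow> int k = cell_index n x"
proof -
  have sqrt_n: "0 < sqrt (real n)"
    using assms by simp
  have bounds: "scaled_magnetization n k - 1 / sqrt (real n) = (2 * real k - real n - 1) / sqrt (real n)"
    "scaled_magnetization n k + 1 / sqrt (real n) = (2 * real k - real n + 1) / sqrt (real n)"
    unfolding scaled_magnetization_def by (simp_all add: diff_divide_distrib add_divide_distrib)
  have "x \<in> cell n k \<longleftrightarrow> 2 * real k - real n - 1 \<le> x * sqrt (real n) \<and> x * sqrt (real n) < 2 * real k - real n + 1"
    unfolding cell_def bounds using sqrt_n by (simp add: pos_divide_le_eq pos_less_divide_eq)
  also have "\<dots> \<longleftrightarrow> real_of_int (int k) \<le> (x * sqrt (real n) + real n + 1) / 2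
                    \<and> (x * sqrt (real n) + real n + 1) / 2 < real_of_int (int k) + 1"
    by (auto simp: field_simps)
  also have "\<dots> \<longleftrightarrow> int k = cell_index n x"
    unfolding cell_index_def using floor_eq_iff[of "(x * sqrt (real n) + real n + 1) / 2" "int k"] by auto
  finally show ?thesis .
qed

lemma sum_times_indicator_cell:
  fixes g :: "nat \<Rightarrow> real"
  assumes "0 < n"
  shows "(\<Sum>k\<le>n. g k * indicator (cell n k) x)
           = (if 0 \<le> cell_index n x \<and> cell_index n x \<le> int n then g (nat (cell_index n x)) else 0)"
proof -
  have "(\<Sum>k\<le>n. g k * indicator (cell n k) x)
      = (\<Sum>k\<le>n. if k = nat (cell_index n x) \<and> 0 \<le> cell_index n x then g k else 0)"
    by (intro sum.cong refl) (auto simp: mem_cell_iff[OF assms] indicator_def)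
  also have "\<dots> = (if 0 \<le> cell_index n x \<and> cell_index n x \<le> int n then g (nat (cell_index n x)) else 0)"
    by (cases "0 \<le> cell_index n x") (auto simp: sum.delta' nat_le_iff)
  finally show ?thesis .
qed

lemma step_density_eq:
  assumes "0 < n"
  shows "step_density \<alpha> \<beta> \<phi> n (x, y) =
    (if 0 \<le> cell_index n x \<and> cell_index n x \<le> int n \<and> 0 \<le> cell_index n y \<and> cell_index n y \<le> int n
     then binomial_ratio n (nat (cell_index n x)) * binomial_ratio n (nat (cell_index n y))
        * boltzmann_obs \<alpha> \<beta> \<phi> (scaled_magnetization n (nat (cell_index n x)), scaled_magnetization n (nat (cell_index n y)))
     else 0)"
proof -
  have "step_density \<alpha> \<beta> \<phi> n (x, y) = (\<Sum>k\<le>n. (\<Sum>l\<le>n. binomial_ratio n k * binomial_ratio n l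
      * boltzmann_obs \<alpha> \<beta> \<phi> (scaled_magnetization n k, scaled_magnetization n l) * indicator (cell n l) y)
      * indicator (cell n k) x)"
    unfolding step_density_def sum_distrib_right by (intro sum.cong refl) (simp add: indicator_times mult_ac)
  then show ?thesis
    by (simp add: sum_times_indicator_cell[OF assms])
qed

lemma eventually_cell_index_in_range:
  "\<forall>\<^sub>F n in sequentially. 0 < n \<and> 0 \<le> cell_index n x \<and> cell_index n x \<le> int n"
  using eventually_ge_at_top[of "nat \<lceil>x\<^sup>2\<rceil> + 1"]
proof eventually_elim
  case (elim n)
  then have "x\<^sup>2 \<le> real n"
    by linarith
  then have "\<bar>x\<bar> \<le> sqrt (real n)"
    using real_sqrt_le_mono[of "x\<^sup>2" "real n"] by simp
  then have "\<bar>x\<bar> * sqrt (real n) \<le> sqrt (real n) * sqrt (real n)"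
    by (rule mult_right_mono) simp
  then have "\<bar>x * sqrt (real n)\<bar> \<le> real n"
    by (simp add: abs_mult)
  then have "- real n \<le> x * sqrt (real n)" "x * sqrt (real n) \<le> real n"
    by (simp_all add: abs_le_iff)
  then show ?case
    using elim unfolding cell_index_def by (simp add: floor_le_iff)
qed

lemma cell_diameter:
  "x \<in> cell n k \<Longrightarrow> \<bar>scaled_magnetization n k - x\<bar> \<le> 1 / sqrt (real n)"
  unfolding cell_def by auto

lemma eventually_mem_cell:
  "\<forall>\<^sub>F n in sequentially. nat (cell_index n x) \<le> n \<and> x \<in> cell n (nat (cell_index n x))"
  using eventually_cell_index_in_range[of x] by eventually_elim (auto simp: mem_cell_iff)

lemma scaled_magnetization_cell_tendsto:
  assumes "\<forall>\<^sub>F n in sequentially. x \<in> cell n (k n)"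
  shows "(\<lambda>n. scaled_magnetization n (k n)) \<longlonglongrightarrow> x"
proof -
  have "(\<lambda>n. 1 / sqrt (real n)) \<longlonglongrightarrow> 0"
    by real_asymp
  moreover have "\<forall>\<^sub>F n in sequentially. norm (scaled_magnetization n (k n) - x) \<le> 1 / sqrt (real n)"
    using assms by eventually_elim (simp add: cell_diameter)
  ultimately have "(\<lambda>n. scaled_magnetization n (k n) - x) \<longlonglongrightarrow> 0"
    by (rule Lim_null_comparison[rotated])
  then show ?thesis
    by (simp add: LIM_zero_iff)
qed

definition limit_density :: "real \<Rightarrow> real \<Rightarrow> (real \<times> real \<Rightarrow> real) \<Rightarrow> real \<times> real \<Rightarrow> real" where
  "limit_density \<alpha> \<beta> \<phi> z = exp (- ((fst z)\<^sup>2 + (snd z)\<^sup>2) / 2) * boltzmann_obs \<alpha> \<beta> \<phi> z"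

lemma boltzmann_obs_tendsto:
  assumes "continuous_on UNIV \<phi>" and "(g \<longlongrightarrow> z) F"
  shows "((\<lambda>t. boltzmann_obs \<alpha> \<beta> \<phi> (g t)) \<longlongrightarrow> boltzmann_obs \<alpha> \<beta> \<phi> z) F"
proof -
  have "isCont \<phi> w" for w
    using assms(1) by (cases w) (simp add: continuous_on_eq_continuous_at)
  then show ?thesis
    unfolding boltzmann_obs_def rot45_def
    by (intro tendsto_intros isCont_tendsto_compose[where g = \<phi>] assms(2)) simp_all
qed

lemma step_density_tendsto:
  assumes "continuous_on UNIV \<phi>"
  shows "(\<lambda>n. step_density \<alpha> \<beta> \<phi> n z) \<longlonglongrightarrow> limit_density \<alpha> \<beta> \<phi> z"
proof -
  obtain x y where z: "z = (x, y)"
    by fastforce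
  define kx ky where "kx n = nat (cell_index n x)" and "ky n = nat (cell_index n y)" for n
  have kx: "\<forall>\<^sub>F n in sequentially. kx n \<le> n" "\<forall>\<^sub>F n in sequentially. x \<in> cell n (kx n)"
    and ky: "\<forall>\<^sub>F n in sequentially. ky n \<le> n" "\<forall>\<^sub>F n in sequentially. y \<in> cell n (ky n)"
    using eventually_mem_cell[of x] eventually_mem_cell[of y] unfolding kx_def ky_def eventually_conj_iff
    by blast+
  have x: "(\<lambda>n. scaled_magnetization n (kx n)) \<longlonglongrightarrow> x" and y: "(\<lambda>n. scaled_magnetization n (ky n)) \<longlonglongrightarrow> y"
    using scaled_magnetization_cell_tendsto[OF kx(2)] scaled_magnetization_cell_tendsto[OF ky(2)] by simp_all
  have "(\<lambda>n. binomial_ratio n (kx n) * binomial_ratio n (ky n)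
                * boltzmann_obs \<alpha> \<beta> \<phi> (scaled_magnetization n (kx n), scaled_magnetization n (ky n)))
               \<longlonglongrightarrow> exp (- x\<^sup>2 / 2) * exp (- y\<^sup>2 / 2) * boltzmann_obs \<alpha> \<beta> \<phi> (x, y)"
    by (intro tendsto_mult binomial_ratio_tendsto_gaussian boltzmann_obs_tendsto[OF assms] tendsto_Pair x y
        kx(1) ky(1))
  moreover have "\<forall>\<^sub>F n in sequentially. binomial_ratio n (kx n) * binomial_ratio n (ky n)
      * boltzmann_obs \<alpha> \<beta> \<phi> (scaled_magnetization n (kx n), scaled_magnetization n (ky n))
      = step_density \<alpha> \<beta> \<phi> n (x, y)"
    using eventually_cell_index_in_range[of x] eventually_cell_index_in_range[of y]
    by eventually_elim (simp add: step_density_eq kx_def ky_def)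
  ultimately have "(\<lambda>n. step_density \<alpha> \<beta> \<phi> n (x, y))
      \<longlonglongrightarrow> exp (- x\<^sup>2 / 2) * exp (- y\<^sup>2 / 2) * boltzmann_obs \<alpha> \<beta> \<phi> (x, y)"
    by (rule Lim_transform_eventually)
  moreover have "exp (- x\<^sup>2 / 2) * exp (- y\<^sup>2 / 2) = exp (- (x\<^sup>2 + y\<^sup>2) / 2)"
    by (simp add: exp_add[symmetric] add_divide_distrib)
  ultimately show ?thesis
    unfolding z limit_density_def by simp
qed

lemma nn_integral_exp_neg_square:
  fixes a :: real
  assumes "0 < a"
  shows "(\<integral>\<^sup>+x. ennreal (exp (- a * x\<^sup>2)) \<partial>lborel) = ennreal (sqrt (pi / a))"
proof -
  define s where "s = sqrt (1 / (2 * a))"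
  have s: "0 < s" "s\<^sup>2 = 1 / (2 * a)"
    unfolding s_def using assms by simp_all
  have "exp (- a * x\<^sup>2) = sqrt (pi / a) * normal_density 0 s x" for x
  proof -
    have "2 * pi * s\<^sup>2 = pi / a" "- ((x - 0)\<^sup>2) / (2 * s\<^sup>2) = - a * x\<^sup>2"
      using assms unfolding s(2) by (simp_all add: field_simps)
    then show ?thesis
      unfolding normal_density_def using assms by (simp add: real_sqrt_divide)
  qed
  then have "(\<integral>\<^sup>+x. ennreal (exp (- a * x\<^sup>2)) \<partial>lborel)
      = ennreal (sqrt (pi / a)) * (\<integral>\<^sup>+x. ennreal (normal_density 0 s x) \<partial>lborel)"
    using assms by (simp add: ennreal_mult nn_integral_cmult)
  also have "(\<integral>\<^sup>+x. ennreal (normal_density 0 s x) \<partial>lborel) = 1"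
    using s(1) by (subst nn_integral_eq_integral) (auto simp: integrable_normal_density integral_normal_density)
  finally show ?thesis
    by simp
qed

definition gauss_kernel :: "real \<Rightarrow> real \<Rightarrow> real \<times> real \<Rightarrow> real" where
  "gauss_kernel a b z = exp (- a * (fst z)\<^sup>2 - b * (snd z)\<^sup>2)"

lemma gauss_kernel_measurable [measurable]: "gauss_kernel a b \<in> borel_measurable borel"
  unfolding gauss_kernel_def[abs_def] by (intro borel_measurable_continuous_onI continuous_intros)

lemma has_bochner_integral_gauss_kernel:
  fixes a b :: real
  assumes "0 < a" "0 < b"
  shows "has_bochner_integral lborel (gauss_kernel a b) (sqrt (pi / a) * sqrt (pi / b))"
proof (rule has_bochner_integral_nn_integral)
  have [measurable]: "gauss_kernel a b \<in> borel_measurable (lborel \<Otimes>\<^sub>M lborel)"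
    unfolding lborel_prod by measurable
  have "(\<integral>\<^sup>+z. ennreal (gauss_kernel a b z) \<partial>lborel)
      = (\<integral>\<^sup>+x. \<integral>\<^sup>+y. ennreal (exp (- a * x\<^sup>2)) * ennreal (exp (- b * y\<^sup>2)) \<partial>lborel \<partial>lborel)"
    unfolding lborel_prod[symmetric]
    by (subst lborel.nn_integral_fst[symmetric]) (auto simp: gauss_kernel_def exp_diff exp_minus ennreal_mult[symmetric] field_simps)
  also have "\<dots> = (\<integral>\<^sup>+x. ennreal (exp (- a * x\<^sup>2)) * ennreal (sqrt (pi / b)) \<partial>lborel)"
    using nn_integral_exp_neg_square[OF assms(2)] by (simp add: nn_integral_cmult)
  also have "\<dots> = ennreal (sqrt (pi / a) * sqrt (pi / b))"
    using nn_integral_exp_neg_square[OF assms(1)] assms by (simp add: nn_integral_multc ennreal_mult)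
  finally show "(\<integral>\<^sup>+z. ennreal (gauss_kernel a b z) \<partial>lborel) = ennreal (sqrt (pi / a) * sqrt (pi / b))" .
qed (use assms in \<open>auto simp: gauss_kernel_def\<close>)

lemma abs_boltzmann_obs_le:
  assumes "0 \<le> \<alpha>" "\<And>w. \<bar>\<phi> w\<bar> \<le> B"
  shows "\<bar>boltzmann_obs \<alpha> \<beta> \<phi> z\<bar> \<le> B * exp ((\<alpha> + \<beta>) / 4 * ((fst z)\<^sup>2 + (snd z)\<^sup>2))"
proof -
  have "\<alpha> * (2 * (fst z * snd z)) \<le> \<alpha> * ((fst z)\<^sup>2 + (snd z)\<^sup>2)"
    using assms(1) sum_squares_bound[of "fst z" "snd z"] by (intro mult_left_mono) auto
  then have "exp (\<beta> / 4 * ((fst z)\<^sup>2 + (snd z)\<^sup>2) + \<alpha> / 2 * (fst z * snd z))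
               \<le> exp ((\<alpha> + \<beta>) / 4 * ((fst z)\<^sup>2 + (snd z)\<^sup>2))"
    by (simp add: field_simps)
  then show ?thesis
    unfolding boltzmann_obs_def abs_mult using assms(2)[of "rot45 z"]
    by (simp add: mult.commute mult_mono)
qed

lemma square_le_cell_center:
  assumes "0 < n" "x \<in> cell n k"
  shows "x\<^sup>2 / 2 - 1 \<le> (scaled_magnetization n k)\<^sup>2"
proof -
  let ?q = "scaled_magnetization n k"
  have "\<bar>?q - x\<bar> \<le> 1"
    using cell_diameter[OF assms(2)] assms(1) by (simp add: divide_le_eq order_trans)
  then have "(?q - x)\<^sup>2 \<le> 1"
    by (simp add: abs_square_le_1)
  moreover have "x\<^sup>2 = 2 * ?q\<^sup>2 + 2 * (?q - x)\<^sup>2 - (2 * ?q - x)\<^sup>2"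
    by (simp add: power2_eq_square algebra_simps)
  ultimately show ?thesis
    using zero_le_power2[of "2 * ?q - x"] by linarith
qed

lemma lattice_term_le_gauss_kernel:
  fixes n k l :: nat and \<alpha> \<beta> :: real
  defines "\<epsilon> \<equiv> (1 / 2 - (\<alpha> + \<beta>) / 4) / 4"
  assumes "0 \<le> \<alpha>" "\<alpha> + \<beta> \<le> 2" "\<And>w. \<bar>\<phi> w\<bar> \<le> B" "1 - 2 * \<epsilon> \<le> real n / (real n + 1)"
    and "0 < n" "k \<le> n" "l \<le> n" "x \<in> cell n k" "y \<in> cell n l"
  shows "binomial_ratio n k * binomial_ratio n l
           * \<bar>boltzmann_obs \<alpha> \<beta> \<phi> (scaled_magnetization n k, scaled_magnetization n l)\<bar>
         \<le> B * exp (1 + 6 * \<epsilon>) * gauss_kernel (3 * \<epsilon> / 2) (3 * \<epsilon> / 2) (x, y)"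
proof -
  let ?q = "scaled_magnetization n k" and ?r = "scaled_magnetization n l"
  have \<epsilon>: "0 \<le> \<epsilon>"
    using assms(3) by (simp add: \<epsilon>_def)
  have B: "0 \<le> B"
    using assms(4)[of 0] by linarith
  have "binomial_ratio n k * binomial_ratio n l * \<bar>boltzmann_obs \<alpha> \<beta> \<phi> (?q, ?r)\<bar>
      \<le> exp (1 / 2 - (1 / 2 - \<epsilon>) * ?q\<^sup>2) * exp (1 / 2 - (1 / 2 - \<epsilon>) * ?r\<^sup>2)
         * (B * exp ((\<alpha> + \<beta>) / 4 * (?q\<^sup>2 + ?r\<^sup>2)))"
    using assms(5-8) \<epsilon> abs_boltzmann_obs_le[where \<phi> = \<phi> and B = B and \<beta> = \<beta> and z = "(?q, ?r)", OF assms(2,4)]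
    by (intro mult_mono binomial_ratio_le_exp_scaled) (auto simp: binomial_ratio_nonneg)
  also have "\<dots> = B * exp (1 - 3 * \<epsilon> * ?q\<^sup>2 - 3 * \<epsilon> * ?r\<^sup>2)"
    unfolding \<epsilon>_def by (simp add: exp_add[symmetric] field_simps)
  also have "\<dots> \<le> B * exp (1 + 6 * \<epsilon> - 3 * \<epsilon> / 2 * x\<^sup>2 - 3 * \<epsilon> / 2 * y\<^sup>2)"
  proof -
    have "3 * \<epsilon> * (x\<^sup>2 / 2 - 1) \<le> 3 * \<epsilon> * ?q\<^sup>2" "3 * \<epsilon> * (y\<^sup>2 / 2 - 1) \<le> 3 * \<epsilon> * ?r\<^sup>2"
      using square_le_cell_center[OF assms(6,9)] square_le_cell_center[OF assms(6,10)] \<epsilon>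
      by (simp_all add: mult_left_mono)
    then have "1 - 3 * \<epsilon> * ?q\<^sup>2 - 3 * \<epsilon> * ?r\<^sup>2 \<le> 1 + 6 * \<epsilon> - 3 * \<epsilon> / 2 * x\<^sup>2 - 3 * \<epsilon> / 2 * y\<^sup>2"
      by (simp add: algebra_simps)
    then show ?thesis
      using B by (simp add: mult_left_mono)
  qed
  also have "\<dots> = B * exp (1 + 6 * \<epsilon>) * gauss_kernel (3 * \<epsilon> / 2) (3 * \<epsilon> / 2) (x, y)"
    unfolding gauss_kernel_def by (simp add: exp_add[symmetric] algebra_simps)
  finally show ?thesis .
qed

lemma step_density_dominated:
  assumes "0 \<le> \<alpha>" "\<alpha> + \<beta> < 2" "\<And>w. \<bar>\<phi> w\<bar> \<le> B"
  defines "\<epsilon> \<equiv> (1 / 2 - (\<alpha> + \<beta>) / 4) / 4"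
  shows "\<forall>\<^sub>F n in sequentially. \<forall>z. \<bar>step_density \<alpha> \<beta> \<phi> n z\<bar>
           \<le> B * exp (1 + 6 * \<epsilon>) * gauss_kernel (3 * \<epsilon> / 2) (3 * \<epsilon> / 2) z"
proof -
  have "(\<lambda>n. real n / (real n + 1)) \<longlonglongrightarrow> 1"
    by real_asymp
  then have "\<forall>\<^sub>F n in sequentially. 1 - 2 * \<epsilon> < real n / (real n + 1)"
    using assms(2) by (intro order_tendstoD(1)) (auto simp: \<epsilon>_def)
  then show ?thesis
    using eventually_gt_at_top[of 0]
  proof eventually_elim
    case (elim n)
    show ?case
    proof
      fix z :: "real \<times> real"
      obtain x y where z: "z = (x, y)"
        by fastforce
      show "\<bar>step_density \<alpha> \<beta> \<phi> n z\<bar> \<le> B * exp (1 + 6 * \<epsilon>) * gauss_kernel (3 * \<epsilon> / 2) (3 * \<epsilon> / 2) z"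
      proof (cases "0 \<le> cell_index n x \<and> cell_index n x \<le> int n \<and> 0 \<le> cell_index n y \<and> cell_index n y \<le> int n")
        case False
        then show ?thesis
          unfolding z step_density_eq[OF elim(2)] if_not_P[OF False]
          using assms(3)[of 0] by (simp add: gauss_kernel_def)
      next
        case True
        define k l where "k = nat (cell_index n x)" and "l = nat (cell_index n y)"
        have kl: "k \<le> n" "l \<le> n" "x \<in> cell n k" "y \<in> cell n l"
          using True elim(2) unfolding k_def l_def by (auto simp: mem_cell_iff)
        have "1 - 2 * \<epsilon> \<le> real n / (real n + 1)"
          using elim(1) by linarith
        then have "binomial_ratio n k * binomial_ratio n l
            * \<bar>boltzmann_obs \<alpha> \<beta> \<phi> (scaled_magnetization n k, scaled_magnetization n l)\<bar>
            \<le> B * exp (1 + 6 * \<epsilon>) * gauss_kernel (3 * \<epsilon> / 2) (3 * \<epsilon> / 2) (x, y)"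
          unfolding \<epsilon>_def using assms(2)
          by (intro lattice_term_le_gauss_kernel[where \<phi> = \<phi> and B = B, OF assms(1) _ assms(3) _ elim(2) kl]) auto
        then show ?thesis
          unfolding z step_density_eq[OF elim(2)] using True
          by (simp add: k_def l_def abs_mult binomial_ratio_nonneg)
      qed
    qed
  qed
qed

lemma limit_density_measurable:
  assumes "continuous_on UNIV \<phi>"
  shows "limit_density \<alpha> \<beta> \<phi> \<in> borel_measurable borel"
proof -
  have [measurable]: "\<phi> \<in> borel_measurable (borel \<Otimes>\<^sub>M borel)"
    using borel_measurable_continuous_onI[OF assms] by (simp add: borel_prod)
  have "limit_density \<alpha> \<beta> \<phi> \<in> borel_measurable (borel \<Otimes>\<^sub>M borel)"
    unfolding limit_density_def[abs_def] boltzmann_obs_def rot45_def by measurable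
  then show ?thesis
    by (simp add: borel_prod)
qed

lemma integral_step_density_tendsto:
  assumes "0 \<le> \<alpha>" "\<alpha> + \<beta> < 2" "continuous_on UNIV \<phi>" "\<And>w. \<bar>\<phi> w\<bar> \<le> B"
  shows "(\<lambda>n. integral\<^sup>L lborel (step_density \<alpha> \<beta> \<phi> n)) \<longlonglongrightarrow> integral\<^sup>L lborel (limit_density \<alpha> \<beta> \<phi>)"
proof -
  define \<epsilon> where "\<epsilon> = (1 / 2 - (\<alpha> + \<beta>) / 4) / 4"
  define g where "g z = B * exp (1 + 6 * \<epsilon>) * gauss_kernel (3 * \<epsilon> / 2) (3 * \<epsilon> / 2) z" for z
  have "0 < \<epsilon>"
    using assms(2) by (simp add: \<epsilon>_def)
  then have "integrable lborel g"
    unfolding g_def using has_bochner_integral_gauss_kernel[of "3 * \<epsilon> / 2" "3 * \<epsilon> / 2"]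
    by (intro integrable_mult_right) (simp add: has_bochner_integral_iff)
  obtain N where N: "\<And>n z. N \<le> n \<Longrightarrow> \<bar>step_density \<alpha> \<beta> \<phi> n z\<bar> \<le> g z"
    using step_density_dominated[where \<phi> = \<phi> and B = B, OF assms(1,2,4)] unfolding g_def \<epsilon>_def eventually_sequentially by blast
  have "(\<lambda>n. integral\<^sup>L lborel (step_density \<alpha> \<beta> \<phi> (n + Suc N))) \<longlonglongrightarrow> integral\<^sup>L lborel (limit_density \<alpha> \<beta> \<phi>)"
  proof (rule integral_dominated_convergence[where w = g])
    show "step_density \<alpha> \<beta> \<phi> (n + Suc N) \<in> borel_measurable lborel" for n
      using step_density_integral(1)[of "n + Suc N"] by (simp add: borel_measurable_integrable)
    show "AE z in lborel. (\<lambda>n. step_density \<alpha> \<beta> \<phi> (n + Suc N) z) \<longlonglongrightarrow> limit_density \<alpha> \<beta> \<phi> z"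
      using LIMSEQ_ignore_initial_segment[OF step_density_tendsto[OF assms(3)], where k = "Suc N"] by simp
    show "AE z in lborel. norm (step_density \<alpha> \<beta> \<phi> (n + Suc N) z) \<le> g z" for n
      using N by simp
  qed (use assms(3) \<open>integrable lborel g\<close> in \<open>auto intro: limit_density_measurable\<close>)
  then show ?thesis
    by (rule LIMSEQ_offset)
qed

section \<open>The limit integral\<close>

lemma nn_integral_lborel_shear_fst:
  fixes g :: "real \<times> real \<Rightarrow> ennreal"
  assumes [measurable]: "g \<in> borel_measurable borel" and "c \<noteq> 0"
  shows "(\<integral>\<^sup>+z. g (c * fst z + t * snd z, snd z) \<partial>lborel) = ennreal (1 / \<bar>c\<bar>) * (\<integral>\<^sup>+z. g z \<partial>lborel)"
proof -
  have [measurable]: "g \<in> borel_measurable (borel \<Otimes>\<^sub>M borel)"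
    by (simp add: borel_prod)
  have inner: "(\<integral>\<^sup>+x. g (c * x + t * y, y) \<partial>lborel) = ennreal (1 / \<bar>c\<bar>) * (\<integral>\<^sup>+x. g (x, y) \<partial>lborel)" for y
  proof -
    have "ennreal (1 / \<bar>c\<bar>) * ennreal \<bar>c\<bar> = 1"
      using assms(2) by (simp flip: ennreal_mult)
    moreover have "(\<integral>\<^sup>+x. g (x, y) \<partial>lborel) = ennreal \<bar>c\<bar> * (\<integral>\<^sup>+x. g (t * y + c * x, y) \<partial>lborel)"
      using assms(2) by (intro nn_integral_real_affine) measurable
    ultimately show ?thesis
      by (simp add: mult.assoc[symmetric] add.commute)
  qed
  have "(\<integral>\<^sup>+z. g (c * fst z + t * snd z, snd z) \<partial>lborel) = (\<integral>\<^sup>+y. \<integral>\<^sup>+x. g (c * x + t * y, y) \<partial>lborel \<partial>lborel)"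
    unfolding lborel_prod[symmetric] by (subst lborel_pair.nn_integral_snd[symmetric]) measurable
  also have "\<dots> = ennreal (1 / \<bar>c\<bar>) * (\<integral>\<^sup>+y. \<integral>\<^sup>+x. g (x, y) \<partial>lborel \<partial>lborel)"
    unfolding inner by (rule nn_integral_cmult) measurable
  also have "(\<integral>\<^sup>+y. \<integral>\<^sup>+x. g (x, y) \<partial>lborel \<partial>lborel) = (\<integral>\<^sup>+z. g z \<partial>lborel)"
    unfolding lborel_prod[symmetric] by (subst lborel_pair.nn_integral_snd[symmetric]) measurable
  finally show ?thesis .
qed

lemma nn_integral_lborel_shear_snd:
  fixes g :: "real \<times> real \<Rightarrow> ennreal"
  assumes [measurable]: "g \<in> borel_measurable borel" and "c \<noteq> 0"
  shows "(\<integral>\<^sup>+z. g (fst z, t * fst z + c * snd z) \<partial>lborel) = ennreal (1 / \<bar>c\<bar>) * (\<integral>\<^sup>+z. g z \<partial>lborel)"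
proof -
  have [measurable]: "g \<in> borel_measurable (borel \<Otimes>\<^sub>M borel)"
    by (simp add: borel_prod)
  have inner: "(\<integral>\<^sup>+y. g (x, t * x + c * y) \<partial>lborel) = ennreal (1 / \<bar>c\<bar>) * (\<integral>\<^sup>+y. g (x, y) \<partial>lborel)" for x
  proof -
    have "ennreal (1 / \<bar>c\<bar>) * ennreal \<bar>c\<bar> = 1"
      using assms(2) by (simp flip: ennreal_mult)
    moreover have "(\<integral>\<^sup>+y. g (x, y) \<partial>lborel) = ennreal \<bar>c\<bar> * (\<integral>\<^sup>+y. g (x, t * x + c * y) \<partial>lborel)"
      using assms(2) by (intro nn_integral_real_affine) measurable
    ultimately show ?thesis
      by (simp add: mult.assoc[symmetric])
  qed
  have "(\<integral>\<^sup>+z. g (fst z, t * fst z + c * snd z) \<partial>lborel) = (\<integral>\<^sup>+x. \<integral>\<^sup>+y. g (x, t * x + c * y) \<partial>lborel \<partial>lborel)"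
    unfolding lborel_prod[symmetric] by (subst lborel.nn_integral_fst[symmetric]) measurable
  also have "\<dots> = ennreal (1 / \<bar>c\<bar>) * (\<integral>\<^sup>+x. \<integral>\<^sup>+y. g (x, y) \<partial>lborel \<partial>lborel)"
    unfolding inner by (rule nn_integral_cmult) measurable
  also have "(\<integral>\<^sup>+x. \<integral>\<^sup>+y. g (x, y) \<partial>lborel \<partial>lborel) = (\<integral>\<^sup>+z. g z \<partial>lborel)"
    unfolding lborel_prod[symmetric] by (subst lborel.nn_integral_fst[symmetric]) measurable
  finally show ?thesis .
qed

lemma rot45_measurable [measurable]: "rot45 \<in> borel_measurable borel"
  unfolding rot45_def by (intro borel_measurable_continuous_onI continuous_intros) simp_all

text \<open>\<open>rot45\<close> is the shear \<open>(u, v) \<mapsto> (u/\<surd>2 + v/\<surd>2, v)\<close> followed by the shear \<open>(a, b) \<mapsto> (a, a - \<surd>2 b)\<close>;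
  their Jacobians \<open>1/\<surd>2\<close> and \<open>-\<surd>2\<close> cancel.\<close>
lemma nn_integral_rot45:
  fixes g :: "real \<times> real \<Rightarrow> ennreal"
  assumes [measurable]: "g \<in> borel_measurable borel"
  shows "(\<integral>\<^sup>+z. g (rot45 z) \<partial>lborel) = (\<integral>\<^sup>+z. g z \<partial>lborel)"
proof -
  define G where "G z = g (fst z, 1 * fst z + (- sqrt 2) * snd z)" for z
  have [measurable]: "g \<in> borel_measurable (borel \<Otimes>\<^sub>M borel)"
    by (simp add: borel_prod)
  have "G \<in> borel_measurable (borel \<Otimes>\<^sub>M borel)"
    unfolding G_def by measurable
  then have [measurable]: "G \<in> borel_measurable borel"
    by (simp add: borel_prod)
  have "g (rot45 z) = G (1 / sqrt 2 * fst z + 1 / sqrt 2 * snd z, snd z)" for z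
  proof -
    have "(fst z + snd z) / sqrt 2 - sqrt 2 * snd z = (fst z - snd z) / sqrt 2"
      by (simp add: field_simps)
    then show ?thesis
      unfolding G_def rot45_def by (simp add: add_divide_distrib)
  qed
  then have "(\<integral>\<^sup>+z. g (rot45 z) \<partial>lborel) = ennreal (sqrt 2) * (\<integral>\<^sup>+z. G z \<partial>lborel)"
    using nn_integral_lborel_shear_fst[of G "1 / sqrt 2" "1 / sqrt 2"] by simp
  also have "(\<integral>\<^sup>+z. G z \<partial>lborel) = ennreal (1 / sqrt 2) * (\<integral>\<^sup>+z. g z \<partial>lborel)"
    unfolding G_def using nn_integral_lborel_shear_snd[of g "- sqrt 2" 1] by simp
  also have "ennreal (sqrt 2) * (ennreal (1 / sqrt 2) * (\<integral>\<^sup>+z. g z \<partial>lborel)) = (\<integral>\<^sup>+z. g z \<partial>lborel)"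
    by (simp add: mult.assoc[symmetric] flip: ennreal_mult)
  finally show ?thesis .
qed

lemma distr_lborel_rot45: "distr lborel borel rot45 = (lborel :: (real \<times> real) measure)"
proof (rule measure_eqI)
  fix A :: "(real \<times> real) set"
  assume "A \<in> sets (distr lborel borel rot45)"
  then have [measurable]: "A \<in> sets borel"
    by simp
  have "emeasure (distr lborel borel rot45) A = emeasure lborel (rot45 -` A \<inter> space lborel)"
    by (rule emeasure_distr) auto
  also have "\<dots> = (\<integral>\<^sup>+z. indicator (rot45 -` A \<inter> space lborel) z \<partial>lborel)"
    by (rule nn_integral_indicator[symmetric]) measurable
  also have "\<dots> = (\<integral>\<^sup>+z. indicator A (rot45 z) \<partial>lborel)"
    by (intro nn_integral_cong) (simp add: indicator_def)
  also have "\<dots> = emeasure lborel A"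
    by (subst nn_integral_rot45) simp_all
  finally show "emeasure (distr lborel borel rot45) A = emeasure lborel A" .
qed simp

lemma integral_rot45:
  fixes h :: "real \<times> real \<Rightarrow> real"
  assumes "h \<in> borel_measurable borel"
  shows "integral\<^sup>L lborel (\<lambda>z. h (rot45 z)) = integral\<^sup>L lborel h"
  using integral_distr[of rot45 lborel borel h] assms by (simp add: distr_lborel_rot45)

lemma limit_density_rot45:
  "limit_density \<alpha> \<beta> \<phi> z
     = gauss_kernel ((1 - (\<alpha> + \<beta>) / 2) / 2) ((1 - (\<beta> - \<alpha>) / 2) / 2) (rot45 z) * \<phi> (rot45 z)"
proof -
  obtain x y where z: "z = (x, y)"
    by fastforce
  have "- (x\<^sup>2 + y\<^sup>2) / 2 + (\<beta> / 4 * (x\<^sup>2 + y\<^sup>2) + \<alpha> / 2 * (x * y))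
      = - ((1 - (\<alpha> + \<beta>) / 2) / 2) * ((x + y) / sqrt 2)\<^sup>2 - ((1 - (\<beta> - \<alpha>) / 2) / 2) * ((x - y) / sqrt 2)\<^sup>2"
    by (simp add: power_divide power2_eq_square field_simps)
  then show ?thesis
    unfolding z limit_density_def boltzmann_obs_def gauss_kernel_def rot45_def
    by (simp add: exp_add[symmetric] mult.assoc[symmetric])
qed

lemma integral_limit_density:
  assumes "continuous_on UNIV \<phi>"
  shows "integral\<^sup>L lborel (limit_density \<alpha> \<beta> \<phi>)
           = integral\<^sup>L lborel (\<lambda>w. gauss_kernel ((1 - (\<alpha> + \<beta>) / 2) / 2) ((1 - (\<beta> - \<alpha>) / 2) / 2) w * \<phi> w)"
proof -
  have [measurable]: "\<phi> \<in> borel_measurable borel"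
    using assms by (rule borel_measurable_continuous_onI)
  show ?thesis
    unfolding limit_density_rot45 by (rule integral_rot45) measurable
qed

lemma gaussian2_diagonal:
  assumes "0 < a" "0 < b"
  shows "gaussian2 (1 / (2 * a)) 0 (1 / (2 * b))
           = density lborel (\<lambda>w. ennreal (gauss_kernel a b w / (sqrt (pi / a) * sqrt (pi / b))))"
proof -
  have "sqrt (pi / a) * sqrt (pi / b) = 2 * pi * sqrt (1 / (2 * a) * (1 / (2 * b)))"
  proof -
    have "sqrt (pi / a) * sqrt (pi / b) = pi / sqrt (a * b)"
      using assms by (simp add: real_sqrt_mult[symmetric] real_sqrt_divide power2_eq_square)
    moreover have "sqrt (1 / (2 * a) * (1 / (2 * b))) = 1 / (2 * sqrt (a * b))"
      using assms by (simp add: real_sqrt_divide real_sqrt_mult)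
    ultimately show ?thesis
      by simp
  qed
  moreover have "- (1 / (2 * b) * x\<^sup>2 + 1 / (2 * a) * y\<^sup>2) / (2 * (1 / (2 * a) * (1 / (2 * b))))
                   = - a * x\<^sup>2 - b * y\<^sup>2" for x y
    using assms by (simp add: field_simps)
  ultimately show ?thesis
    unfolding gaussian2_def gauss_kernel_def by (simp add: case_prod_beta')
qed

lemma integral_gaussian2_diagonal:
  assumes "0 < a" "0 < b" "f \<in> borel_measurable borel"
  shows "integral\<^sup>L (gaussian2 (1 / (2 * a)) 0 (1 / (2 * b))) f
           = integral\<^sup>L lborel (\<lambda>w. gauss_kernel a b w * f w) / integral\<^sup>L lborel (gauss_kernel a b)"
proof -
  have "integral\<^sup>L lborel (gauss_kernel a b) = sqrt (pi / a) * sqrt (pi / b)"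
    using has_bochner_integral_gauss_kernel[OF assms(1,2)] by (simp add: has_bochner_integral_iff)
  moreover have "integral\<^sup>L (gaussian2 (1 / (2 * a)) 0 (1 / (2 * b))) f
      = integral\<^sup>L lborel (\<lambda>w. (gauss_kernel a b w / (sqrt (pi / a) * sqrt (pi / b))) *\<^sub>R f w)"
    unfolding gaussian2_diagonal[OF assms(1,2)]
  proof (rule integral_density)
    show "(\<lambda>w. gauss_kernel a b w / (sqrt (pi / a) * sqrt (pi / b))) \<in> borel_measurable lborel"
      by measurable
    show "AE w in lborel. 0 \<le> gauss_kernel a b w / (sqrt (pi / a) * sqrt (pi / b))"
      using assms(1,2) by (intro AE_I2 divide_nonneg_nonneg) (simp_all add: gauss_kernel_def)
  qed (simp add: assms(3))
  ultimately show ?thesis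
    by (simp add: mult.commute[of _ "f _"] mult.assoc[symmetric] flip: integral_divide_zero)
qed

lemma gibbs_expectation_tendsto:
  assumes "0 \<le> \<alpha>" "\<alpha> + \<beta> < 2" "\<And>n. S n \<subseteq> {1..2 * n}" "\<And>n. card (S n) = n"
    and "continuous_on UNIV f" "\<And>w. \<bar>f w\<bar> \<le> B"
  defines "a \<equiv> (1 - (\<alpha> + \<beta>) / 2) / 2" and "b \<equiv> (1 - (\<beta> - \<alpha>) / 2) / 2"
  shows "(\<lambda>n. integral\<^sup>L (gibbs_measure (2 * n) \<alpha> \<beta> (S n)) (\<lambda>\<sigma>. f (w1 (2 * n) \<sigma>, w2 (2 * n) (S n) \<sigma>)))
           \<longlonglongrightarrow> integral\<^sup>L lborel (\<lambda>w. gauss_kernel a b w * f w) / integral\<^sup>L lborel (gauss_kernel a b)"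
proof -
  have "0 < a" "0 < b"
    using assms(1,2) unfolding a_def b_def by simp_all
  then have "integral\<^sup>L lborel (gauss_kernel a b) \<noteq> 0"
    using has_bochner_integral_gauss_kernel[of a b] by (simp add: has_bochner_integral_iff)
  moreover have "(\<lambda>n. integral\<^sup>L lborel (step_density \<alpha> \<beta> f n)) \<longlonglongrightarrow> integral\<^sup>L lborel (\<lambda>w. gauss_kernel a b w * f w)"
    using integral_step_density_tendsto[where \<phi> = f and B = B, OF assms(1,2,5,6)]
    unfolding integral_limit_density[OF assms(5)] a_def b_def .
  moreover have "(\<lambda>n. integral\<^sup>L lborel (step_density \<alpha> \<beta> (\<lambda>_. 1) n)) \<longlonglongrightarrow> integral\<^sup>L lborel (gauss_kernel a b)"
    using integral_step_density_tendsto[where \<phi> = "\<lambda>_. 1" and B = 1, OF assms(1,2)]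
    unfolding integral_limit_density[OF continuous_on_const] a_def b_def by simp
  ultimately have "(\<lambda>n. integral\<^sup>L lborel (step_density \<alpha> \<beta> f n) / integral\<^sup>L lborel (step_density \<alpha> \<beta> (\<lambda>_. 1) n))
      \<longlonglongrightarrow> integral\<^sup>L lborel (\<lambda>w. gauss_kernel a b w * f w) / integral\<^sup>L lborel (gauss_kernel a b)"
    by (intro tendsto_divide)
  moreover have "\<forall>\<^sub>F n in sequentially.
      integral\<^sup>L lborel (step_density \<alpha> \<beta> f n) / integral\<^sup>L lborel (step_density \<alpha> \<beta> (\<lambda>_. 1) n)
      = integral\<^sup>L (gibbs_measure (2 * n) \<alpha> \<beta> (S n)) (\<lambda>\<sigma>. f (w1 (2 * n) \<sigma>, w2 (2 * n) (S n) \<sigma>))"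
    using eventually_gt_at_top[of 0]
    by eventually_elim (simp add: step_density_integral(2) integral_gibbs_measure_eq_lattice_sums[OF _ assms(3,4)])
  ultimately show ?thesis
    by (rule Lim_transform_eventually)
qed

theorem lemma3p1:
  fixes \<alpha> \<beta> :: real and S :: "nat \<Rightarrow> nat set"
  assumes "0 \<le> \<alpha>" and "\<alpha> < \<beta>" and "\<alpha> + \<beta> < 2"
    and "\<And>n. S n \<subseteq> {1..2 * n}" and "\<And>n. card (S n) = n"
  shows "conv_distr2 (\<lambda>n. gibbs_measure (2 * n) \<alpha> \<beta> (S n))
           (\<lambda>n \<sigma>. (w1 (2 * n) \<sigma>, w2 (2 * n) (S n) \<sigma>))
           (gaussian2 (1 / (1 - (\<alpha> + \<beta>) / 2)) 0 (1 / (1 - (\<beta> - \<alpha>) / 2)))"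
  unfolding conv_distr2_def
proof (intro allI impI)
  fix f :: "real \<times> real \<Rightarrow> real"
  assume f: "continuous_on UNIV f \<and> bounded (range f)"
  then obtain B where B: "\<And>w. \<bar>f w\<bar> \<le> B"
    unfolding bounded_iff by auto
  define a b where "a = (1 - (\<alpha> + \<beta>) / 2) / 2" and "b = (1 - (\<beta> - \<alpha>) / 2) / 2"
  have "0 < a" "0 < b"
    using assms(1,3) unfolding a_def b_def by simp_all
  have lim: "(\<lambda>n. integral\<^sup>L (gibbs_measure (2 * n) \<alpha> \<beta> (S n)) (\<lambda>\<sigma>. f (w1 (2 * n) \<sigma>, w2 (2 * n) (S n) \<sigma>)))
      \<longlonglongrightarrow> integral\<^sup>L lborel (\<lambda>w. gauss_kernel a b w * f w) / integral\<^sup>L lborel (gauss_kernel a b)"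
    using gibbs_expectation_tendsto[OF assms(1,3-5), where f = f and B = B] f B
    unfolding a_def b_def by blast
  moreover have "integral\<^sup>L (gaussian2 (1 / (2 * a)) 0 (1 / (2 * b))) f
      = integral\<^sup>L lborel (\<lambda>w. gauss_kernel a b w * f w) / integral\<^sup>L lborel (gauss_kernel a b)"
    using \<open>0 < a\<close> \<open>0 < b\<close> f by (simp add: integral_gaussian2_diagonal borel_measurable_continuous_onI)
  moreover have "1 - (\<alpha> + \<beta>) / 2 = 2 * a" "1 - (\<beta> - \<alpha>) / 2 = 2 * b"
    unfolding a_def b_def by simp_all
  ultimately show "(\<lambda>n. integral\<^sup>L (gibbs_measure (2 * n) \<alpha> \<beta> (S n)) (\<lambda>\<sigma>. f (w1 (2 * n) \<sigma>, w2 (2 * n) (S n) \<sigma>)))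
      \<longlonglongrightarrow> integral\<^sup>L (gaussian2 (1 / (1 - (\<alpha> + \<beta>) / 2)) 0 (1 / (1 - (\<beta> - \<alpha>) / 2))) f"
    by simp
qed

end
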